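(* Assume the environments are defined by a class of linear spurious correlation latent SCMs $\mathcal{M}_\mathcal{E}$, and let $e^+$ be any test domain with $\mathcal{M}_{e^+}\in\mathcal{M}_\mathcal{E}$. Let $\theta\in\mathbb{R}^d$ satisfy the NCM constraint $\theta^\top\tilde{Q}_r=0$. Then: (a) for logistic regression with log loss $\ell_{\mathrm{LL}}$, $$\mathbb{E}_{({\mathbf{x}}_{e^+},{\textnormal{y}}_{e^+})\sim\mathbb{P}_{\mathrm{test}}}[\ell_{\mathrm{LL}}(\theta^\top{\mathbf{x}}_{e^+},{\textnormal{y}}_{e^+})]\le\mathbb{E}_{({\mathbf{x}},{\textnormal{y}})\sim\mathbb{P}_{\mathrm{train}}}[\ell_{\mathrm{LL}}(\theta^\top{\mathbf{x}},{\textnormal{y}})]+\|\theta\|\,\big\|\tilde{Q}_{r,\perp}^\top Q\,\Lambda^{1/2}\big\|;$$ (b) for linear regression with squared error loss $\ell_{\mathrm{SE}}$, $$\mathbb{E}_{({\mathbf{x}}_{e^+},{\textnormal{y}}_{e^+})\sim\mathbb{P}_{\mathrm{test}}}[\ell_{\mathrm{SE}}(\theta^\top{\mathbf{x}}_{e^+},{\textnormal{y}}_{e^+})]\le 2\,\mathbb{E}_{({\mathbf{x}},{\textnormal{y}})\sim\mathbb{P}_{\mathrm{train}}}[\ell_{\mathrm{SE}}(\theta^\top{\mathbf{x}},{\textnormal{y}})]+2\|\theta\|^2\big\|\tilde{Q}_{r,\perp}^\top Q\,\Lambda^{1/2}\big\|^2.$$ Furthermore, with $s:=\min\{r,|\mathcal{I}(\mathcal{F}_\mathcal{E})|\}$,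 $$\big\|\tilde{Q}_{r,\perp}^\top Q\,\Lambda^{1/2}\big\|^2\le\lambda_1(e^+)\,\mathrm{dist}^2(\tilde{Q}_s,Q_s)+\lambda_{s+1}(e^+).$$
   Context: Setting. $\mathcal{E}$ is a set of domains; each domain $e$ has an SCM $\mathcal{M}_e$, all sharing the same exogenous noise ${\mathbf{u}}\sim\mathbb{P}_\mathcal{U}$, latent variables ${\mathbf{z}}$, observed input ${\mathbf{x}}\in\mathbb{R}^d$ and target ${\textnormal{y}}$. Latent mechanisms $f_{e,i}$ may depend on $e$; write $f_e$ for the induced solution map ${\bm{u}}\mapsto{\bm{z}}$. The observed mechanisms are shared across domains: ${\mathbf{x}}_e=g_{\mathbf{x}}(f_e({\mathbf{u}}))$ with $g_{\mathbf{x}}$ linear, and ${\textnormal{y}}=g_{\textnormal{y}}({\mathbf{z}})$ with $g_{\textnormal{y}}$ linear (linear regression) or the sign of a linear function, ${\textnormal{y}}\in\{-1,1\}$ (logistic regression); the SCMs are linear. The intervention set is $\mathcal{I}(\mathcal{F}_\mathcal{E})=\{i:f_{e,i}\neq f_{e',i}\text{ for some }e,e'\in\mathcal{E}\}$, and the spurious correlation assumption is that no $i\in\mathcal{I}(\mathcal{F}_\mathcal{E})$ is an ancestor of ${\textnormal{y}}$. Training domains $\mathcal{E}_{\mathrm{train}}\subseteq\mathcal{E}$ have weights $\mathbb{P}(e)$, and $\mathbb{P}_{\mathrm{train}}=\sum_{e\in\mathcal{E}_{\mathrm{train}}}\mathbb{P}(e)\mathbb{P}_e$; $\mathbb{P}_{\mathrm{test}}$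 is the distribution of domain $e^+$. For the same noise ${\mathbf{u}}$ define ${\mathbf{x}}_{e^+}=g_{\mathbf{x}}(f_{e^+}({\mathbf{u}}))$ and ${\mathbf{x}}_{e^+\to e}=g_{\mathbf{x}}(f_e({\mathbf{u}}))$. Let $M_{e^+}:=\sum_{e\in\mathcal{E}_{\mathrm{train}}}\mathbb{P}(e)\,\mathbb{E}_{\mathbf{u}}[({\mathbf{x}}_{e^+}-{\mathbf{x}}_{e^+\to e})({\mathbf{x}}_{e^+}-{\mathbf{x}}_{e^+\to e})^\top]=Q\Lambda Q^\top$, where $Q\in\mathbb{R}^{d\times|\mathcal{I}(\mathcal{F}_\mathcal{E})|}$ has orthonormal columns and $\Lambda$ is diagonal with the eigenvalues $\lambda_1(e^+)\ge\lambda_2(e^+)\ge\dots$ of $M_{e^+}$ (eigenvalues beyond index $|\mathcal{I}(\mathcal{F}_\mathcal{E})|$ are zero); $Q_s$ denotes the first $s$ columns of $Q$ and $\lambda_j(e^+)$ the $j$-th largest eigenvalue of $M_{e^+}$. NCM: given $k$ (possibly noisy) counterfactual pairs $({\bm{x}}_{e_j},{\bm{x}}_{e'_j})$, let $\tilde{\Delta}_{\mathbf{x}}=[{\bm{x}}_{e_1}-{\bm{x}}_{e'_1},\dots,{\bm{x}}_{e_k}-{\bm{x}}_{e'_k}]\in\mathbb{R}^{d\times k}$; $\tilde{Q}_r\in\mathbb{R}^{d\times r}$ is the matrix of left singular vectors for the $r$ largest singular values of $\tilde{\Delta}_{\mathbf{x}}$ (similarly $\tilde{Q}_s$), and $\tilde{Q}_{r,\perp}\in\mathbb{R}^{d\times(d-r)}$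 is an orthonormal basis of the orthogonal complement of its column space. Predictions are $\theta^\top{\mathbf{x}}$; $\ell_{\mathrm{LL}}(t,y)=\log(1+e^{-yt})$, $\ell_{\mathrm{SE}}(t,y)=(t-y)^2$. $\|\cdot\|$ is the Euclidean/spectral norm, and $\mathrm{dist}(Q,Q'):=\|QQ^\top-Q'Q'^\top\|$. *)

theory Defs
  imports "HOL-Analysis.Analysis" "HOL-Probability.Probability"
begin

text \<open>Latent nodes are indexed by the finite type 'n; each node i has its
  own exogenous noise u\$i, and the noise vector u (shared by all domains) has law P.
  In domain e the mechanism of node i is  z_i = (row i of A e) . z + c e \$ i * u_i.\<close>

definition mech :: "('e \<Rightarrow> real^'n^'n) \<Rightarrow> ('e \<Rightarrow> real^'n) \<Rightarrow> 'e \<Rightarrow> 'n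
    \<Rightarrow> (real^'n \<Rightarrow> real^'n \<Rightarrow> real)" where
  "mech A c e i = (\<lambda>z u. A e $ i \<bullet> z + c e $ i * u $ i)"

definition interv_set :: "('e \<Rightarrow> real^'n^'n) \<Rightarrow> ('e \<Rightarrow> real^'n) \<Rightarrow> 'e set \<Rightarrow> 'n set" where
  "interv_set A c Es = {i. \<exists>e\<in>Es. \<exists>e'\<in>Es. mech A c e i \<noteq> mech A c e' i}"

definition graph_of :: "('e \<Rightarrow> real^'n^'n) \<Rightarrow> 'e \<Rightarrow> ('n \<times> 'n) set" where
  "graph_of A e = {(j, i). A e $ i $ j \<noteq> 0}"

definition latent_edges :: "('e \<Rightarrow> real^'n^'n) \<Rightarrow> 'e set \<Rightarrow> ('n \<times> 'n) set" where
  "latent_edges A Es = (\<Union>e\<in>Es. graph_of A e)"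

text \<open>Node i is an ancestor of the target y = g_y(z), whose parents are the z_j with w\$j \<noteq> 0.\<close>
definition ancestor_of_target :: "('e \<Rightarrow> real^'n^'n) \<Rightarrow> 'e set \<Rightarrow> real^'n \<Rightarrow> 'n \<Rightarrow> bool" where
  "ancestor_of_target A Es w i = (\<exists>j. w $ j \<noteq> 0 \<and> (i, j) \<in> (latent_edges A Es)\<^sup>*)"

definition solve :: "('e \<Rightarrow> real^'n^'n) \<Rightarrow> ('e \<Rightarrow> real^'n) \<Rightarrow> 'e \<Rightarrow> real^'n \<Rightarrow> real^'n" where
  "solve A c e u = (THE z. \<forall>i. z $ i = mech A c e i z u)"

definition obs :: "real^'n^'d \<Rightarrow> ('e \<Rightarrow> real^'n^'n) \<Rightarrow> ('e \<Rightarrow> real^'n) \<Rightarrow> 'e \<Rightarrow> real^'n \<Rightarrow> real^'d" where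
  "obs G A c e u = G *v solve A c e u"

text \<open>Binary target for logistic regression: sign of a linear function, in {-1,1}.\<close>
definition label_sign :: "real^'n \<Rightarrow> real^'n \<Rightarrow> real" where
  "label_sign w z = (if 0 < w \<bullet> z then 1 else -1)"

definition ell_LL :: "real \<Rightarrow> real \<Rightarrow> real" where
  "ell_LL t y = ln (1 + exp (- (y * t)))"

definition ell_SE :: "real \<Rightarrow> real \<Rightarrow> real" where
  "ell_SE t y = (t - y)\<^sup>2"

definition outer :: "real^'d \<Rightarrow> real^'d \<Rightarrow> real^'d^'d" where
  "outer a b = (\<chi> i j. a $ i * b $ j)"

definition orthonormal_upto :: "nat \<Rightarrow> (nat \<Rightarrow> 'a::real_inner) \<Rightarrow> bool" where
  "orthonormal_upto n Q = (\<forall>i<n. \<forall>j<n. Q i \<bullet> Q j = (if i = j then 1 else 0))"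

text \<open>Q_s Q_s^T for the d x s matrix Q_s with columns Q 0, ..., Q (s-1).\<close>
definition span_proj :: "(nat \<Rightarrow> real^'d) \<Rightarrow> nat \<Rightarrow> real^'d^'d" where
  "span_proj Q s = (\<Sum>j<s. outer (Q j) (Q j))"

definition subspace_dist :: "(nat \<Rightarrow> real^'d) \<Rightarrow> (nat \<Rightarrow> real^'d) \<Rightarrow> nat \<Rightarrow> real" where
  "subspace_dist Q Q' s = onorm (\<lambda>x. (span_proj Q s - span_proj Q' s) *v x)"

definition mat_opnorm :: "nat \<Rightarrow> nat \<Rightarrow> (nat \<Rightarrow> nat \<Rightarrow> real) \<Rightarrow> real" where
  "mat_opnorm m n A = (SUP c\<in>{c::nat \<Rightarrow> real. (\<Sum>j<n. (c j)\<^sup>2) \<le> 1}.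
       sqrt (\<Sum>i<m. (\<Sum>j<n. A i j * c j)\<^sup>2))"

end

(*
  The spurious-correlation assumption makes the target the same linear function of the shared
  noise in every domain, so the test loss differs from the loss in a training domain e only
  through the input shift x_{e+} - x_{e+ -> e}: the log loss is 1-Lipschitz in the prediction,
  and the squared loss satisfies (a + b)^2 <= 2 a^2 + 2 b^2.  Averaged over the training
  domains, the shift enters through the quadratic form theta^T M_{e+} theta =
  sum_j lambda_j (q_j^T theta)^2.  The NCM constraint puts theta into the span of the columns
  of Qtilde_{r,perp}, which bounds this form by ||theta||^2 ||Qtilde_{r,perp}^T Q Lambda^{1/2}||^2.
  For the last bound split a unit coefficient vector at s: its head lies in span Q_s, whose
  component orthogonal to span Qtilde_s is at most dist(Qtilde_s, Q_s) times its length, and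
  its tail only meets eigenvalues at most lambda_{s+1}.
*)

theory Submission
  imports Defs
begin

section \<open>Linear SCMs\<close>

lemma mech_eq: "mech A c e i z u = (A e *v z) $ i + c e $ i * u $ i"
  by (simp add: mech_def inner_vec_def matrix_vector_mult_def)

lemma wf_graph_of:
  fixes A :: "'e \<Rightarrow> real^'n::finite^'n"
  shows "acyclic (graph_of A e) \<Longrightarrow> wf (graph_of A e)"
  by (rule finite_acyclic_wf) simp_all

lemma acyclic_fixpoint_eq_0:
  fixes A :: "'e \<Rightarrow> real^'n::finite^'n"
  assumes "acyclic (graph_of A e)" and fixpoint: "A e *v z = z"
  shows "z = 0"
proof -
  have "z $ i = 0" for i
    using wf_graph_of[OF assms(1)]
  proof (induction i rule: wf_induct_rule)
    case (less i)
    have "z $ i = (\<Sum>j\<in>UNIV. A e $ i $ j * z $ j)"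
      by (subst fixpoint[symmetric]) (simp add: matrix_vector_mult_def)
    also have "\<dots> = 0"
      by (rule sum.neutral) (auto simp: graph_of_def intro: less)
    finally show ?case .
  qed
  then show ?thesis
    by (simp add: vec_eq_iff)
qed

lemma solve_eq_iff:
  fixes A :: "'e \<Rightarrow> real^'n::finite^'n"
  assumes "acyclic (graph_of A e)"
  shows "solve A c e u = z \<longleftrightarrow> (\<forall>i. z $ i = mech A c e i z u)"
proof -
  define T where "T z = z - A e *v z" for z :: "real^'n"
  define b where "b = (\<chi> i. c e $ i * u $ i)"
  have eqn_iff: "(\<forall>i. z $ i = mech A c e i z u) \<longleftrightarrow> T z = b" for z
    by (auto simp: T_def b_def mech_eq vec_eq_iff algebra_simps)
  have "linear T"
    unfolding T_def by (intro linear_compose_sub linear_ident matrix_vector_mul_linear)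
  moreover have "inj T"
  proof (rule injI)
    fix x y
    assume "T x = T y"
    then have "A e *v (x - y) = x - y"
      by (simp add: T_def matrix_vector_mult_diff_distrib algebra_simps)
    then have "x - y = 0"
      by (rule acyclic_fixpoint_eq_0[OF assms])
    then show "x = y"
      by simp
  qed
  ultimately have "surj T"
    by (rule linear_inj_imp_surj)
  with \<open>inj T\<close> have uniq: "\<exists>!z. T z = b"
    by (metis injD surjD)
  show ?thesis
    unfolding solve_def eqn_iff using the1_equality[OF uniq] theI'[OF uniq] by blast
qed

lemma solve_mech:
  fixes A :: "'e \<Rightarrow> real^'n::finite^'n"
  assumes "acyclic (graph_of A e)"
  shows "solve A c e u $ i = mech A c e i (solve A c e u) u"
  using solve_eq_iff[OF assms] by blast

lemma linear_solve:
  fixes A :: "'e \<Rightarrow> real^'n::finite^'n"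
  assumes "acyclic (graph_of A e)"
  shows "linear (solve A c e)"
proof (rule linearI)
  fix x y :: "real^'n" and r :: real
  show "solve A c e (x + y) = solve A c e x + solve A c e y"
    using solve_mech[OF assms, of c x] solve_mech[OF assms, of c y]
    by (subst solve_eq_iff[OF assms]) (auto simp: mech_eq algebra_simps)
  show "solve A c e (r *\<^sub>R x) = r *\<^sub>R solve A c e x"
    using solve_mech[OF assms, of c x]
    by (subst solve_eq_iff[OF assms]) (auto simp: mech_eq algebra_simps)
qed

lemma linear_obs:
  fixes A :: "'e \<Rightarrow> real^'n::finite^'n"
  assumes "acyclic (graph_of A e)"
  shows "linear (obs G A c e)"
  unfolding obs_def
  using linear_compose[OF linear_solve[OF assms] matrix_vector_mul_linear[of G]]
  by (simp add: o_def)

lemma linear_inner_right_comp: "linear f \<Longrightarrow> linear (\<lambda>u. v \<bullet> f u)"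
  by (simp add: linear_iff inner_add_right)

lemma target_solve_invariant:
  fixes A :: "'e \<Rightarrow> real^'n::finite^'n"
  assumes acyclic: "acyclic (graph_of A e)" "acyclic (graph_of A e')"
    and domains: "e \<in> Es" "e' \<in> Es"
    and spurious: "\<forall>i\<in>interv_set A c Es. \<not> ancestor_of_target A Es w i"
  shows "w \<bullet> solve A c e u = w \<bullet> solve A c e' u"
proof -
  define z z' where "z = solve A c e u" and "z' = solve A c e' u"
  have ancestor_eq: "ancestor_of_target A Es w i \<longrightarrow> z $ i = z' $ i" for i
    using wf_graph_of[OF acyclic(1)]
  proof (induction i rule: wf_induct_rule)
    case (less i)
    show ?case
    proof
      assume anc: "ancestor_of_target A Es w i"
      then have same_mech: "mech A c e i = mech A c e' i"
        using spurious domains unfolding interv_set_def by blast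
      have coef_eq: "A e $ i $ j * z $ j = A e $ i $ j * z' $ j" for j
      proof (cases "A e $ i $ j = 0")
        case False
        then have edge: "(j, i) \<in> graph_of A e"
          by (simp add: graph_of_def)
        then have "(j, i) \<in> latent_edges A Es"
          using domains by (auto simp: latent_edges_def)
        then have "ancestor_of_target A Es w j"
          using anc unfolding ancestor_of_target_def by (meson converse_rtrancl_into_rtrancl)
        then show ?thesis
          using less edge by simp
      qed simp
      then have "(A e *v z) $ i = (A e *v z') $ i"
        by (simp add: matrix_vector_mult_def coef_eq)
      then have "z $ i = mech A c e i z' u"
        using solve_mech[OF acyclic(1), of c u i] by (simp add: z_def mech_eq)
      also have "\<dots> = z' $ i"
        using same_mech solve_mech[OF acyclic(2), of c u i] by (simp add: z'_def)
      finally show "z $ i = z' $ i" .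
    qed
  qed
  have coef_eq: "w $ j * z $ j = w $ j * z' $ j" for j
    using ancestor_eq[of j] unfolding ancestor_of_target_def by fastforce
  then have "w \<bullet> z = w \<bullet> z'"
    unfolding inner_vec_def inner_real_def by (simp only: coef_eq)
  then show ?thesis
    by (simp add: z_def z'_def)
qed

lemma inner_sum_orthonormal_upto:
  assumes "orthonormal_upto n Q" and "J \<subseteq> {..<n}" and "k < n"
  shows "Q k \<bullet> (\<Sum>j\<in>J. a j *\<^sub>R Q j) = (if k \<in> J then a k else 0)"
proof -
  have "Q k \<bullet> (\<Sum>j\<in>J. a j *\<^sub>R Q j) = (\<Sum>j\<in>J. if j = k then a k else 0)"
    using assms by (auto simp: inner_sum_right orthonormal_upto_def intro!: sum.cong)
  also have "\<dots> = (if k \<in> J then a k else 0)"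
    using finite_subset[OF assms(2)] by simp
  finally show ?thesis .
qed

lemma norm_sum_orthonormal_upto:
  assumes "orthonormal_upto n Q" and "J \<subseteq> {..<n}"
  shows "(norm (\<Sum>j\<in>J. a j *\<^sub>R Q j))\<^sup>2 = (\<Sum>j\<in>J. (a j)\<^sup>2)"
proof -
  have "(norm (\<Sum>j\<in>J. a j *\<^sub>R Q j))\<^sup>2 = (\<Sum>j\<in>J. a j * (Q j \<bullet> (\<Sum>k\<in>J. a k *\<^sub>R Q k)))"
    by (simp add: power2_norm_eq_inner inner_sum_left)
  also have "\<dots> = (\<Sum>j\<in>J. (a j)\<^sup>2)"
  proof (rule sum.cong)
    fix j
    assume "j \<in> J"
    then show "a j * (Q j \<bullet> (\<Sum>k\<in>J. a k *\<^sub>R Q k)) = (a j)\<^sup>2"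
      using assms inner_sum_orthonormal_upto[OF assms] by (auto simp: power2_eq_square)
  qed simp
  finally show ?thesis .
qed

lemma sum_lessThan_add:
  fixes f :: "nat \<Rightarrow> 'a::comm_monoid_add"
  shows "(\<Sum>k<r + m. f k) = (\<Sum>k<r. f k) + (\<Sum>i<m. f (r + i))"
  by (induction m) (simp_all add: add.assoc)

lemma orthonormal_upto_append:
  assumes "orthonormal_upto r U" and "orthonormal_upto m V"
    and "\<forall>i<m. \<forall>j<r. V i \<bullet> U j = 0"
  shows "orthonormal_upto (r + m) (\<lambda>k. if k < r then U k else V (k - r))"
  using assms unfolding orthonormal_upto_def
  by (auto simp: inner_commute)

lemma orthonormal_upto_expansion:
  fixes b :: "nat \<Rightarrow> 'a::euclidean_space"
  assumes orth: "orthonormal_upto DIM('a) b"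
  shows "(\<Sum>k<DIM('a). (b k \<bullet> y) *\<^sub>R b k) = y"
proof -
  let ?B = "b ` {..<DIM('a)}"
  have inner_b: "b i \<bullet> b j = (if i = j then 1 else 0)" if "i < DIM('a)" "j < DIM('a)" for i j
    using orth that by (simp add: orthonormal_upto_def)
  have inj: "inj_on b {..<DIM('a)}"
    by (rule inj_onI) (metis inner_b lessThan_iff zero_neq_one)
  have "pairwise orthogonal ?B"
    by (auto simp: pairwise_def orthogonal_def inner_b)
  moreover have "\<And>x. x \<in> ?B \<Longrightarrow> norm x = 1"
    by (auto simp: norm_eq_1 inner_b)
  moreover have "y \<in> span ?B"
  proof -
    have "independent ?B"
      using \<open>pairwise orthogonal ?B\<close>
      by (rule pairwise_orthogonal_independent) (metis imageE inner_b inner_zero_left lessThan_iff zero_neq_one)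
    moreover have "card ?B = dim (UNIV :: 'a set)"
      using card_image[OF inj] by simp
    ultimately have "UNIV \<subseteq> span ?B"
      by (intro card_ge_dim_independent) auto
    then show ?thesis
      by blast
  qed
  ultimately have "(\<Sum>x\<in>?B. (y \<bullet> x) *\<^sub>R x) = y"
    by (intro orthonormal_basis_expand) auto
  then show ?thesis
    by (simp add: sum.reindex[OF inj] inner_commute)
qed

lemma orthonormal_upto_parseval:
  fixes b :: "nat \<Rightarrow> 'a::euclidean_space"
  assumes "orthonormal_upto DIM('a) b"
  shows "(norm y)\<^sup>2 = (\<Sum>k<DIM('a). (b k \<bullet> y)\<^sup>2)"
  using norm_sum_orthonormal_upto[OF assms order_refl, of "\<lambda>k. b k \<bullet> y"]
  by (simp add: orthonormal_upto_expansion[OF assms])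

lemma orthonormal_upto_complement:
  fixes U V :: "nat \<Rightarrow> 'a::euclidean_space"
  assumes "orthonormal_upto r U" and "orthonormal_upto (DIM('a) - r) V"
    and "\<forall>i<DIM('a) - r. \<forall>j<r. V i \<bullet> U j = 0" and "r \<le> DIM('a)"
  shows "orthonormal_upto DIM('a) (\<lambda>k. if k < r then U k else V (k - r))"
  using orthonormal_upto_append[OF assms(1-3)] assms(4) by simp

lemma orthonormal_complement_parseval:
  fixes U V :: "nat \<Rightarrow> 'a::euclidean_space"
  assumes "orthonormal_upto r U" and "orthonormal_upto (DIM('a) - r) V"
    and "\<forall>i<DIM('a) - r. \<forall>j<r. V i \<bullet> U j = 0" and "r \<le> DIM('a)"
  shows "(norm y)\<^sup>2 = (\<Sum>j<r. (U j \<bullet> y)\<^sup>2) + (\<Sum>i<DIM('a) - r. (V i \<bullet> y)\<^sup>2)"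
  using orthonormal_upto_parseval[OF orthonormal_upto_complement[OF assms], of y]
  by (simp add: sum_lessThan_add[of _ r "DIM('a) - r", unfolded le_add_diff_inverse[OF assms(4)]])

lemma orthonormal_complement_expansion:
  fixes U V :: "nat \<Rightarrow> 'a::euclidean_space"
  assumes "orthonormal_upto r U" and "orthonormal_upto (DIM('a) - r) V"
    and "\<forall>i<DIM('a) - r. \<forall>j<r. V i \<bullet> U j = 0" and "r \<le> DIM('a)"
    and "\<forall>j<r. U j \<bullet> y = 0"
  shows "(\<Sum>i<DIM('a) - r. (V i \<bullet> y) *\<^sub>R V i) = y"
  using orthonormal_upto_expansion[OF orthonormal_upto_complement[OF assms(1-4)], of y] assms(5)
  by (simp add: sum_lessThan_add[of _ r "DIM('a) - r", unfolded le_add_diff_inverse[OF assms(4)]])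

lemmas orthonormal_complement_parseval_cart =
  orthonormal_complement_parseval[where 'a = "real^'d::finite", unfolded DIM_cart DIM_real mult_1_right]

lemmas orthonormal_complement_expansion_cart =
  orthonormal_complement_expansion[where 'a = "real^'d::finite", unfolded DIM_cart DIM_real mult_1_right]

lemma norm_diff_orthonormal_projection:
  assumes "orthonormal_upto s U"
  shows "(norm (x - (\<Sum>j<s. (U j \<bullet> x) *\<^sub>R U j)))\<^sup>2 = (norm x)\<^sup>2 - (\<Sum>j<s. (U j \<bullet> x)\<^sup>2)"
proof -
  let ?p = "\<Sum>j<s. (U j \<bullet> x) *\<^sub>R U j"
  have "x \<bullet> ?p = (\<Sum>j<s. (U j \<bullet> x)\<^sup>2)"
    by (simp add: inner_sum_right inner_commute power2_eq_square)
  moreover have "?p \<bullet> ?p = (\<Sum>j<s. (U j \<bullet> x)\<^sup>2)"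
    using norm_sum_orthonormal_upto[OF assms order_refl] by (simp add: power2_norm_eq_inner)
  ultimately show ?thesis
    by (simp add: power2_norm_eq_inner inner_diff_left inner_diff_right inner_commute)
qed

section \<open>The spectral norm of a finite matrix\<close>

lemma mat_opnorm_bdd_above:
  "bdd_above ((\<lambda>c. sqrt (\<Sum>i<m. (\<Sum>j<n. a i j * c j)\<^sup>2)) ` {c :: nat \<Rightarrow> real. (\<Sum>j<n. (c j)\<^sup>2) \<le> 1})"
proof (rule bdd_aboveI2)
  fix c :: "nat \<Rightarrow> real"
  assume "c \<in> {c. (\<Sum>j<n. (c j)\<^sup>2) \<le> 1}"
  then have unit: "(\<Sum>j<n. (c j)\<^sup>2) \<le> 1"
    by simp
  have "(\<Sum>j<n. a i j * c j)\<^sup>2 \<le> (\<Sum>j<n. (a i j)\<^sup>2)" for i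
  proof -
    have "(\<Sum>j<n. a i j * c j)\<^sup>2 \<le> (\<Sum>j<n. (a i j)\<^sup>2) * (\<Sum>j<n. (c j)\<^sup>2)"
      by (rule Cauchy_Schwarz_ineq_sum)
    also have "\<dots> \<le> (\<Sum>j<n. (a i j)\<^sup>2)"
      using unit by (intro mult_left_le) (auto intro: sum_nonneg)
    finally show ?thesis .
  qed
  then show "sqrt (\<Sum>i<m. (\<Sum>j<n. a i j * c j)\<^sup>2) \<le> sqrt (\<Sum>i<m. \<Sum>j<n. (a i j)\<^sup>2)"
    by (simp add: sum_mono)
qed

lemma mat_opnorm_ge:
  assumes "(\<Sum>j<n. (c j)\<^sup>2) \<le> 1"
  shows "sqrt (\<Sum>i<m. (\<Sum>j<n. a i j * c j)\<^sup>2) \<le> mat_opnorm m n a"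
  unfolding mat_opnorm_def using assms by (intro cSUP_upper[OF _ mat_opnorm_bdd_above]) simp

lemma mat_opnorm_nonneg: "0 \<le> mat_opnorm m n a"
  using mat_opnorm_ge[where c = "\<lambda>_. 0" and n = n and m = m and a = a] by simp

lemma mat_opnorm_square_le:
  assumes "\<And>c. (\<Sum>j<n. (c j)\<^sup>2) \<le> 1 \<Longrightarrow> (\<Sum>i<m. (\<Sum>j<n. a i j * c j)\<^sup>2) \<le> K"
  shows "(mat_opnorm m n a)\<^sup>2 \<le> K"
proof -
  have "0 \<le> K"
    using assms[of "\<lambda>_. 0"] by simp
  have "mat_opnorm m n a \<le> sqrt K"
    unfolding mat_opnorm_def by (rule cSUP_least) (auto intro!: exI[of _ "\<lambda>_. 0"] assms)
  then have "(mat_opnorm m n a)\<^sup>2 \<le> (sqrt K)\<^sup>2"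
    by (rule power_mono) (rule mat_opnorm_nonneg)
  then show ?thesis
    using \<open>0 \<le> K\<close> by simp
qed

lemma mat_opnorm_mult_le:
  "(\<Sum>i<m. (\<Sum>j<n. a i j * c j)\<^sup>2) \<le> (mat_opnorm m n a)\<^sup>2 * (\<Sum>j<n. (c j)\<^sup>2)"
proof (cases "(\<Sum>j<n. (c j)\<^sup>2) = 0")
  case True
  then show ?thesis
    by (simp add: sum_nonneg_eq_0_iff)
next
  case False
  define S where "S = (\<Sum>j<n. (c j)\<^sup>2)"
  have "0 < S"
    using False sum_nonneg[of "{..<n}" "\<lambda>j. (c j)\<^sup>2"] by (simp add: S_def)
  define c' where "c' j = c j / sqrt S" for j
  have "(\<Sum>j<n. (c' j)\<^sup>2) = 1"
    using \<open>0 < S\<close> by (simp add: c'_def power_divide S_def flip: sum_divide_distrib)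
  then have "sqrt (\<Sum>i<m. (\<Sum>j<n. a i j * c' j)\<^sup>2) \<le> mat_opnorm m n a"
    by (intro mat_opnorm_ge) simp
  then have "(sqrt (\<Sum>i<m. (\<Sum>j<n. a i j * c' j)\<^sup>2))\<^sup>2 \<le> (mat_opnorm m n a)\<^sup>2"
    by (rule power_mono) (auto intro: sum_nonneg)
  then have "(\<Sum>i<m. (\<Sum>j<n. a i j * c' j)\<^sup>2) \<le> (mat_opnorm m n a)\<^sup>2"
    by (subst (asm) real_sqrt_pow2) (auto intro: sum_nonneg)
  moreover have "(\<Sum>i<m. (\<Sum>j<n. a i j * c' j)\<^sup>2) = (\<Sum>i<m. (\<Sum>j<n. a i j * c j)\<^sup>2) / S"
    using \<open>0 < S\<close> by (simp add: c'_def power_divide flip: sum_divide_distrib)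
  ultimately show ?thesis
    using \<open>0 < S\<close> by (simp add: S_def divide_le_eq)
qed

lemma mat_opnorm_transpose_mult_le:
  "(\<Sum>j<n. (\<Sum>i<m. a i j * v i)\<^sup>2) \<le> (mat_opnorm m n a)\<^sup>2 * (\<Sum>i<m. (v i)\<^sup>2)"
proof -
  define y where "y j = (\<Sum>i<m. a i j * v i)" for j
  define Y where "Y = (\<Sum>j<n. (y j)\<^sup>2)"
  have "Y = (\<Sum>i<m. v i * (\<Sum>j<n. a i j * y j))"
    by (simp add: Y_def y_def power2_eq_square sum_distrib_left sum_distrib_right mult_ac
        sum.swap[of _ "{..<n}"])
  then have "Y\<^sup>2 \<le> (\<Sum>i<m. (v i)\<^sup>2) * (\<Sum>i<m. (\<Sum>j<n. a i j * y j)\<^sup>2)"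
    by (simp add: Cauchy_Schwarz_ineq_sum)
  also have "\<dots> \<le> (\<Sum>i<m. (v i)\<^sup>2) * ((mat_opnorm m n a)\<^sup>2 * Y)"
    unfolding Y_def by (intro mult_left_mono mat_opnorm_mult_le) (auto intro: sum_nonneg)
  finally have "Y * Y \<le> ((mat_opnorm m n a)\<^sup>2 * (\<Sum>i<m. (v i)\<^sup>2)) * Y"
    by (simp add: power2_eq_square mult_ac)
  moreover have "0 \<le> Y"
    unfolding Y_def by (auto intro: sum_nonneg)
  ultimately have "Y \<le> (mat_opnorm m n a)\<^sup>2 * (\<Sum>i<m. (v i)\<^sup>2)"
    by (cases "Y = 0") (auto simp: sum_nonneg mult_le_cancel_right)
  then show ?thesis
    by (simp add: Y_def y_def)
qed

lemma outer_mult_vec: "outer a b *v v = (b \<bullet> v) *\<^sub>R a"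
  by (simp add: outer_def matrix_vector_mult_def vec_eq_iff inner_vec_def sum_distrib_left mult_ac)

lemma sum_matrix_vector_mult: "finite J \<Longrightarrow> (\<Sum>j\<in>J. M j) *v v = (\<Sum>j\<in>J. M j *v v)"
  by (induction J rule: finite_induct) (auto simp: matrix_vector_mult_add_rdistrib)

lemma span_proj_mult_vec: "span_proj Q s *v v = (\<Sum>j<s. (Q j \<bullet> v) *\<^sub>R Q j)"
  by (simp add: span_proj_def sum_matrix_vector_mult outer_mult_vec)

lemma inner_outer_sum_mult_vec:
  fixes Q :: "nat \<Rightarrow> real^'d::finite"
  shows "v \<bullet> ((\<Sum>j<n. lam j *\<^sub>R outer (Q j) (Q j)) *v v) = (\<Sum>j<n. lam j * (Q j \<bullet> v)\<^sup>2)"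
  by (simp add: sum_matrix_vector_mult outer_mult_vec scaleR_matrix_vector_assoc[symmetric]
      inner_sum_right power2_eq_square mult_ac inner_commute)

lemma outer_sum_coeff_nonneg:
  assumes "orthonormal_upto n Q" and psd: "\<And>v. 0 \<le> v \<bullet> ((\<Sum>j<n. lam j *\<^sub>R outer (Q j) (Q j)) *v v)"
    and "k < n"
  shows "0 \<le> lam k"
proof -
  have "(\<Sum>j<n. lam j * (Q j \<bullet> Q k)\<^sup>2) = (\<Sum>j<n. if j = k then lam k else 0)"
    using assms by (intro sum.cong) (auto simp: orthonormal_upto_def)
  then show ?thesis
    using psd[of "Q k"] \<open>k < n\<close> by (simp add: inner_outer_sum_mult_vec)
qed

lemma inner_second_moment_mult_vec:
  fixes X :: "'e \<Rightarrow> 'a \<Rightarrow> real^'d::finite"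
  assumes "finite E" and integrable: "\<And>e i j. e \<in> E \<Longrightarrow> integrable M (\<lambda>u. X e u $ i * X e u $ j)"
  shows "v \<bullet> ((\<chi> i j. \<Sum>e\<in>E. p e * (\<integral>u. X e u $ i * X e u $ j \<partial>M)) *v v)
    = (\<Sum>e\<in>E. p e * (\<integral>u. (v \<bullet> X e u)\<^sup>2 \<partial>M))"
proof -
  have "(\<integral>u. (v \<bullet> X e u)\<^sup>2 \<partial>M) = (\<Sum>i\<in>UNIV. \<Sum>j\<in>UNIV. v $ i * v $ j * (\<integral>u. X e u $ i * X e u $ j \<partial>M))"
    if "e \<in> E" for e
  proof -
    have "(\<lambda>u. (v \<bullet> X e u)\<^sup>2) = (\<lambda>u. \<Sum>i\<in>UNIV. \<Sum>j\<in>UNIV. v $ i * v $ j * (X e u $ i * X e u $ j))"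
      by (simp add: inner_vec_def power2_eq_square sum_product mult_ac)
    then show ?thesis
      using integrable[OF that] by (simp add: integral_sum integrable_sum)
  qed
  moreover have "v \<bullet> ((\<chi> i j. \<Sum>e\<in>E. p e * (\<integral>u. X e u $ i * X e u $ j \<partial>M)) *v v)
      = (\<Sum>e\<in>E. p e * (\<Sum>i\<in>UNIV. \<Sum>j\<in>UNIV. v $ i * v $ j * (\<integral>u. X e u $ i * X e u $ j \<partial>M)))"
    by (simp add: inner_vec_def matrix_vector_mult_def sum_distrib_left sum_distrib_right mult_ac
        sum.swap[of _ E])
  ultimately show ?thesis
    by simp
qed

section \<open>Bounds through the orthogonal complement of the NCM subspace\<close>

lemma spectral_energy_le_mat_opnorm:
  fixes U V Q :: "nat \<Rightarrow> real^'d::finite"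
  assumes U: "orthonormal_upto r U" and V: "orthonormal_upto (CARD('d) - r) V"
    and cross: "\<forall>i<CARD('d) - r. \<forall>j<r. V i \<bullet> U j = 0" and "r \<le> CARD('d)"
    and lam: "\<forall>j. 0 \<le> lam j" and perp: "\<forall>j<r. U j \<bullet> \<theta> = 0"
  shows "(\<Sum>j<n. lam j * (Q j \<bullet> \<theta>)\<^sup>2)
    \<le> (norm \<theta> * mat_opnorm (CARD('d) - r) n (\<lambda>i j. (V i \<bullet> Q j) * sqrt (lam j)))\<^sup>2"
proof -
  let ?m = "CARD('d) - r"
  have \<theta>: "\<theta> = (\<Sum>i<?m. (V i \<bullet> \<theta>) *\<^sub>R V i)"
    using orthonormal_complement_expansion_cart[OF U V cross \<open>r \<le> CARD('d)\<close> perp] by simp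
  have norm_\<theta>: "(norm \<theta>)\<^sup>2 = (\<Sum>i<?m. (V i \<bullet> \<theta>)\<^sup>2)"
    using orthonormal_complement_parseval_cart[OF U V cross \<open>r \<le> CARD('d)\<close>, of \<theta>] perp by simp
  have "lam j * (Q j \<bullet> \<theta>)\<^sup>2 = (\<Sum>i<?m. ((V i \<bullet> Q j) * sqrt (lam j)) * (V i \<bullet> \<theta>))\<^sup>2" for j
  proof -
    have "Q j \<bullet> \<theta> = (\<Sum>i<?m. (V i \<bullet> Q j) * (V i \<bullet> \<theta>))"
      by (subst \<theta>) (simp add: inner_sum_right inner_commute mult_ac)
    then show ?thesis
      using lam by (simp add: power_mult_distrib sum_distrib_right mult_ac flip: sum_distrib_left)
  qed
  then have "(\<Sum>j<n. lam j * (Q j \<bullet> \<theta>)\<^sup>2)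
      = (\<Sum>j<n. (\<Sum>i<?m. ((V i \<bullet> Q j) * sqrt (lam j)) * (V i \<bullet> \<theta>))\<^sup>2)"
    by simp
  also have "\<dots> \<le> (mat_opnorm ?m n (\<lambda>i j. (V i \<bullet> Q j) * sqrt (lam j)))\<^sup>2 * (norm \<theta>)\<^sup>2"
    unfolding norm_\<theta> by (rule mat_opnorm_transpose_mult_le)
  finally show ?thesis
    by (simp add: power_mult_distrib mult_ac)
qed

lemma power2_add_le_mult_add:
  fixes a b \<alpha> \<beta> p q :: real
  assumes a: "a\<^sup>2 \<le> \<alpha> * p" and b: "b\<^sup>2 \<le> \<beta> * q"
    and "0 \<le> \<alpha>" "0 \<le> \<beta>" "0 \<le> p" "0 \<le> q"
  shows "(a + b)\<^sup>2 \<le> (\<alpha> + \<beta>) * (p + q)"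
proof -
  have "(2 * a * b)\<^sup>2 = 4 * (a\<^sup>2 * b\<^sup>2)"
    by (simp add: power_mult_distrib)
  also have "\<dots> \<le> 4 * ((\<alpha> * p) * (\<beta> * q))"
    using mult_mono[OF a b] assms(3-6) by simp
  also have "\<dots> = (\<alpha> * q + \<beta> * p)\<^sup>2 - (\<alpha> * q - \<beta> * p)\<^sup>2"
    by (simp add: power2_eq_square algebra_simps)
  also have "\<dots> \<le> (\<alpha> * q + \<beta> * p)\<^sup>2"
    by simp
  finally have "2 * a * b \<le> \<alpha> * q + \<beta> * p"
    by (rule power2_le_imp_le) (use assms in simp)
  moreover have "(\<alpha> + \<beta>) * (p + q) = \<alpha> * p + \<beta> * q + (\<alpha> * q + \<beta> * p)"
    by (simp add: algebra_simps)
  ultimately show ?thesis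
    using a b unfolding power2_sum by linarith
qed

lemma complement_energy_le_subspace_dist:
  fixes U V Q :: "nat \<Rightarrow> real^'d::finite"
  assumes U: "orthonormal_upto r U" and V: "orthonormal_upto (CARD('d) - r) V"
    and cross: "\<forall>i<CARD('d) - r. \<forall>j<r. V i \<bullet> U j = 0" and "r \<le> CARD('d)"
    and "s \<le> r" and x: "span_proj Q s *v x = x"
  shows "(\<Sum>i<CARD('d) - r. (V i \<bullet> x)\<^sup>2) \<le> (subspace_dist U Q s * norm x)\<^sup>2"
proof -
  have U_s: "orthonormal_upto s U"
    using U \<open>s \<le> r\<close> by (simp add: orthonormal_upto_def)
  have "(\<Sum>j<s. (U j \<bullet> x)\<^sup>2) \<le> (\<Sum>j<r. (U j \<bullet> x)\<^sup>2)"
    by (rule sum_mono2) (use \<open>s \<le> r\<close> in auto)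
  then have "(\<Sum>i<CARD('d) - r. (V i \<bullet> x)\<^sup>2) \<le> (norm x)\<^sup>2 - (\<Sum>j<s. (U j \<bullet> x)\<^sup>2)"
    using orthonormal_complement_parseval_cart[OF U V cross \<open>r \<le> CARD('d)\<close>, of x] by simp
  also have "\<dots> = (norm (x - span_proj U s *v x))\<^sup>2"
    by (simp add: norm_diff_orthonormal_projection[OF U_s] span_proj_mult_vec)
  also have "x - span_proj U s *v x = - ((span_proj U s - span_proj Q s) *v x)"
    using x by (simp add: matrix_vector_mult_diff_rdistrib)
  also have "(norm (- ((span_proj U s - span_proj Q s) *v x)))\<^sup>2 \<le> (subspace_dist U Q s * norm x)\<^sup>2"
    unfolding norm_minus_cancel subspace_dist_def
    by (intro power_mono onorm[OF matrix_vector_mul_bounded_linear]) simp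
  finally show ?thesis .
qed

lemma mat_opnorm_complement_spectral_le:
  fixes U V Q :: "nat \<Rightarrow> real^'d::finite"
  assumes U: "orthonormal_upto r U" and V: "orthonormal_upto (CARD('d) - r) V"
    and cross: "\<forall>i<CARD('d) - r. \<forall>j<r. V i \<bullet> U j = 0" and "r \<le> CARD('d)"
    and Q: "orthonormal_upto n Q" and lam: "\<forall>j. 0 \<le> lam j"
    and sorted: "\<forall>i j. i \<le> j \<longrightarrow> j < n \<longrightarrow> lam j \<le> lam i"
    and s: "s = min r n"
  shows "(mat_opnorm (CARD('d) - r) n (\<lambda>i j. (V i \<bullet> Q j) * sqrt (lam j)))\<^sup>2
           \<le> lam 0 * (subspace_dist U Q s)\<^sup>2 + lam s"
proof (rule mat_opnorm_square_le)
  fix c :: "nat \<Rightarrow> real"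
  assume unit: "(\<Sum>j<n. (c j)\<^sup>2) \<le> 1"
  let ?m = "CARD('d) - r" and ?d = "subspace_dist U Q s"
  define g where "g j = sqrt (lam j) * c j" for j
  define x1 x2 where "x1 = (\<Sum>j<s. g j *\<^sub>R Q j)" and "x2 = (\<Sum>j\<in>{s..<n}. g j *\<^sub>R Q j)"
  have "s \<le> n" "s \<le> r"
    using s by auto
  have split: "(\<Sum>j<n. f j) = (\<Sum>j<s. f j) + (\<Sum>j\<in>{s..<n}. f j)" for f :: "nat \<Rightarrow> real"
    using \<open>s \<le> n\<close> by (simp add: sum.atLeastLessThan_concat flip: atLeast0LessThan)
  have g_sq: "(g j)\<^sup>2 = lam j * (c j)\<^sup>2" for j
    using lam by (simp add: g_def power_mult_distrib)
  have energy1: "(\<Sum>i<?m. (V i \<bullet> x1)\<^sup>2) \<le> (lam 0 * ?d\<^sup>2) * (\<Sum>j<s. (c j)\<^sup>2)"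
  proof -
    have x1: "span_proj Q s *v x1 = x1"
      using \<open>s \<le> n\<close> by (auto simp: span_proj_mult_vec x1_def inner_sum_orthonormal_upto[OF Q] intro!: sum.cong)
    have norm_x1: "(norm x1)\<^sup>2 \<le> lam 0 * (\<Sum>j<s. (c j)\<^sup>2)"
    proof -
      have "(norm x1)\<^sup>2 = (\<Sum>j<s. lam j * (c j)\<^sup>2)"
        unfolding x1_def using \<open>s \<le> n\<close> by (simp add: norm_sum_orthonormal_upto[OF Q] g_sq)
      also have "\<dots> \<le> (\<Sum>j<s. lam 0 * (c j)\<^sup>2)"
        using sorted \<open>s \<le> n\<close> by (intro sum_mono mult_right_mono) auto
      finally show ?thesis
        by (simp add: sum_distrib_left)
    qed
    have "(\<Sum>i<?m. (V i \<bullet> x1)\<^sup>2) \<le> ?d\<^sup>2 * (norm x1)\<^sup>2"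
      using complement_energy_le_subspace_dist[OF U V cross \<open>r \<le> CARD('d)\<close> \<open>s \<le> r\<close> x1]
      by (simp add: power_mult_distrib)
    also have "\<dots> \<le> ?d\<^sup>2 * (lam 0 * (\<Sum>j<s. (c j)\<^sup>2))"
      using norm_x1 by (rule mult_left_mono) simp
    finally show ?thesis
      by (simp add: mult_ac)
  qed
  have energy2: "(\<Sum>i<?m. (V i \<bullet> x2)\<^sup>2) \<le> lam s * (\<Sum>j\<in>{s..<n}. (c j)\<^sup>2)"
  proof -
    have "(\<Sum>i<?m. (V i \<bullet> x2)\<^sup>2) \<le> (norm x2)\<^sup>2"
      using orthonormal_complement_parseval_cart[OF U V cross \<open>r \<le> CARD('d)\<close>, of x2] by (simp add: sum_nonneg)
    also have "\<dots> = (\<Sum>j\<in>{s..<n}. lam j * (c j)\<^sup>2)"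
      unfolding x2_def by (simp add: norm_sum_orthonormal_upto[OF Q, of "{s..<n}"] subset_eq g_sq)
    also have "\<dots> \<le> (\<Sum>j\<in>{s..<n}. lam s * (c j)\<^sup>2)"
      using sorted by (intro sum_mono mult_right_mono) auto
    finally show ?thesis
      by (simp add: sum_distrib_left)
  qed
  have "(\<Sum>j<n. (V i \<bullet> Q j) * sqrt (lam j) * c j) = V i \<bullet> x1 + V i \<bullet> x2" for i
    by (simp add: x1_def x2_def g_def inner_sum_right split mult_ac)
  then have "(\<Sum>i<?m. (\<Sum>j<n. (V i \<bullet> Q j) * sqrt (lam j) * c j)\<^sup>2)
      = (L2_set (\<lambda>i. V i \<bullet> x1 + V i \<bullet> x2) {..<?m})\<^sup>2"
    by (simp add: L2_set_def sum_nonneg)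
  also have "\<dots> \<le> (L2_set (\<lambda>i. V i \<bullet> x1) {..<?m} + L2_set (\<lambda>i. V i \<bullet> x2) {..<?m})\<^sup>2"
    by (intro power_mono L2_set_triangle_ineq L2_set_nonneg)
  also have "\<dots> \<le> (lam 0 * ?d\<^sup>2 + lam s) * ((\<Sum>j<s. (c j)\<^sup>2) + (\<Sum>j\<in>{s..<n}. (c j)\<^sup>2))"
    using energy1 energy2 lam
    by (intro power2_add_le_mult_add) (simp_all add: L2_set_def sum_nonneg)
  also have "\<dots> \<le> lam 0 * ?d\<^sup>2 + lam s"
    using unit lam by (intro mult_left_le) (simp_all add: split[symmetric])
  finally show "(\<Sum>i<?m. (\<Sum>j<n. (V i \<bullet> Q j) * sqrt (lam j) * c j)\<^sup>2) \<le> lam 0 * ?d\<^sup>2 + lam s" .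
qed

section \<open>Losses of linear predictors\<close>

lemma ln_one_plus_exp_le:
  fixes a b :: real
  shows "ln (1 + exp a) \<le> ln (1 + exp b) + \<bar>a - b\<bar>"
proof -
  have "exp a \<le> exp (b + \<bar>a - b\<bar>)"
    by simp
  then have "1 + exp a \<le> exp \<bar>a - b\<bar> + exp (b + \<bar>a - b\<bar>)"
    by (intro add_mono) simp_all
  also have "\<dots> = (1 + exp b) * exp \<bar>a - b\<bar>"
    by (simp add: exp_add algebra_simps)
  finally have "ln (1 + exp a) \<le> ln ((1 + exp b) * exp \<bar>a - b\<bar>)"
    by (simp add: add_pos_pos)
  also have "\<dots> = ln (1 + exp b) + \<bar>a - b\<bar>"
    using add_pos_pos[OF zero_less_one exp_gt_zero[of b]] by (simp add: ln_mult)
  finally show ?thesis .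
qed

lemma ell_LL_le: "y = 1 \<or> y = -1 \<Longrightarrow> ell_LL t y \<le> ell_LL t' y + \<bar>t - t'\<bar>"
  using ln_one_plus_exp_le[of "- (y * t)" "- (y * t')"] by (auto simp: ell_LL_def abs_minus_commute)

lemma ell_LL_nonneg: "0 \<le> ell_LL t y"
  by (simp add: ell_LL_def add_pos_pos)

lemma weighted_mean_square_le:
  fixes p a :: "'e \<Rightarrow> real"
  assumes "finite E" and "\<forall>e\<in>E. 0 \<le> p e" and "(\<Sum>e\<in>E. p e) = 1"
  shows "(\<Sum>e\<in>E. p e * a e)\<^sup>2 \<le> (\<Sum>e\<in>E. p e * (a e)\<^sup>2)"
  using convex_on_sum[OF assms(1) _ convex_power2 assms(3), of a] assms by fastforce

lemma weighted_average_le: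
  fixes p L' R :: "'e \<Rightarrow> real"
  assumes "finite E" and "\<forall>e\<in>E. 0 \<le> p e" and "(\<Sum>e\<in>E. p e) = 1"
    and "\<And>e. e \<in> E \<Longrightarrow> L \<le> a * L' e + R e"
  shows "L \<le> a * (\<Sum>e\<in>E. p e * L' e) + (\<Sum>e\<in>E. p e * R e)"
proof -
  have "L = (\<Sum>e\<in>E. p e * L)"
    using assms(3) by (simp flip: sum_distrib_right)
  also have "\<dots> \<le> (\<Sum>e\<in>E. p e * (a * L' e + R e))"
    using assms(2,4) by (intro sum_mono mult_left_mono) auto
  also have "\<dots> = a * (\<Sum>e\<in>E. p e * L' e) + (\<Sum>e\<in>E. p e * R e)"
    by (simp add: algebra_simps sum.distrib sum_distrib_left)
  finally show ?thesis .
qed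

lemma power2_norm_vec: "(norm (u :: real^'n::finite))\<^sup>2 = (\<Sum>k\<in>UNIV. (u $ k)\<^sup>2)"
  unfolding power2_norm_eq_inner by (simp add: inner_vec_def power2_eq_square)

locale finite_second_moments = prob_space P
  for P :: "(real^'n::finite) measure" +
  assumes sets_P: "sets P = sets borel"
    and integrable_coord_square: "\<And>k. integrable P (\<lambda>u. (u $ k)\<^sup>2)"
begin

lemma borel_measurable_linear:
  fixes f :: "real^'n \<Rightarrow> real"
  assumes "linear f"
  shows "f \<in> borel_measurable P"
proof -
  have "f \<in> borel_measurable borel"
    using assms by (intro borel_measurable_continuous_onI linear_continuous_on) (simp add: linear_linear)
  then show ?thesis
    using measurable_cong_sets[OF sets_P refl] by blast
qed

lemma integrable_linear_square:
  fixes f :: "real^'n \<Rightarrow> real"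
  assumes "linear f"
  shows "integrable P (\<lambda>u. (f u)\<^sup>2)"
proof -
  obtain K where K: "\<And>u. norm (f u) \<le> norm u * K"
    using bounded_linear.bounded assms by (metis linear_linear)
  have "integrable P (\<lambda>u. K\<^sup>2 * (\<Sum>k\<in>UNIV. (u $ k)\<^sup>2))"
    using integrable_coord_square by simp
  then show ?thesis
  proof (rule Bochner_Integration.integrable_bound)
    show "(\<lambda>u. (f u)\<^sup>2) \<in> borel_measurable P"
      using borel_measurable_linear[OF assms] by measurable
    have "(f u)\<^sup>2 \<le> K\<^sup>2 * (\<Sum>k\<in>UNIV. (u $ k)\<^sup>2)" for u
    proof -
      have "(f u)\<^sup>2 = (norm (f u))\<^sup>2"
        by simp
      also have "\<dots> \<le> (norm u * K)\<^sup>2"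
        by (rule power_mono[OF K norm_ge_zero])
      also have "\<dots> = K\<^sup>2 * (\<Sum>k\<in>UNIV. (u $ k)\<^sup>2)"
        by (simp add: power_mult_distrib power2_norm_vec)
      finally show ?thesis .
    qed
    then show "AE u in P. norm ((f u)\<^sup>2) \<le> norm (K\<^sup>2 * (\<Sum>k\<in>UNIV. (u $ k)\<^sup>2))"
      by (simp add: sum_nonneg)
  qed
qed

lemma integrable_linear:
  fixes f :: "real^'n \<Rightarrow> real"
  assumes "linear f"
  shows "integrable P f"
  using square_integrable_imp_integrable borel_measurable_linear integrable_linear_square assms by blast

lemma integrable_linear_mult:
  fixes f g :: "real^'n \<Rightarrow> real"
  assumes "linear f" and "linear g"
  shows "integrable P (\<lambda>u. f u * g u)"
proof -
  have "(\<lambda>u. f u * g u) = (\<lambda>u. ((f u + g u)\<^sup>2 - (f u)\<^sup>2 - (g u)\<^sup>2) / 2)"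
    by (simp add: power2_eq_square algebra_simps)
  moreover have "linear (\<lambda>u. f u + g u)"
    using assms by (rule linear_compose_add)
  ultimately show ?thesis
    using assms by (simp add: integrable_linear_square)
qed

lemma expectation_abs_square_le:
  fixes f :: "real^'n \<Rightarrow> real"
  assumes "f \<in> borel_measurable P" and "integrable P (\<lambda>u. (f u)\<^sup>2)"
  shows "(\<integral>u. \<bar>f u\<bar> \<partial>P)\<^sup>2 \<le> (\<integral>u. (f u)\<^sup>2 \<partial>P)"
proof -
  have "integrable P (\<lambda>u. \<bar>f u\<bar>)"
    using square_integrable_imp_integrable assms by blast
  then show ?thesis
    using variance_eq[of "\<lambda>u. \<bar>f u\<bar>"] variance_positive[of "\<lambda>u. \<bar>f u\<bar>"] assms(2) by simp
qed

lemma integrable_log_loss: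
  fixes f y :: "real^'n \<Rightarrow> real"
  assumes "linear f" and [measurable]: "y \<in> borel_measurable P" and "\<forall>u. y u = 1 \<or> y u = -1"
  shows "integrable P (\<lambda>u. ell_LL (f u) (y u))"
proof (rule Bochner_Integration.integrable_bound)
  show "integrable P (\<lambda>u. ln 2 + \<bar>f u\<bar>)"
    using integrable_linear[OF assms(1)] by simp
  have [measurable]: "f \<in> borel_measurable P"
    using assms(1) by (rule borel_measurable_linear)
  show "(\<lambda>u. ell_LL (f u) (y u)) \<in> borel_measurable P"
    unfolding ell_LL_def by measurable
  have "ell_LL (f u) (y u) \<le> ln 2 + \<bar>f u\<bar>" for u
    using ell_LL_le[of "y u" "f u" 0] assms(3) by (auto simp: ell_LL_def)
  then show "AE u in P. norm (ell_LL (f u) (y u)) \<le> norm (ln 2 + \<bar>f u\<bar>)"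
    by (simp add: ell_LL_nonneg)
qed

lemma log_loss_transfer:
  fixes f y :: "real^'n \<Rightarrow> real" and g :: "'e \<Rightarrow> real^'n \<Rightarrow> real"
  assumes E: "finite E" "\<forall>e\<in>E. 0 \<le> p e" "(\<Sum>e\<in>E. p e) = 1"
    and lin: "linear f" "\<forall>e\<in>E. linear (g e)"
    and y: "y \<in> borel_measurable P" "\<forall>u. y u = 1 \<or> y u = -1"
    and shift: "(\<Sum>e\<in>E. p e * (\<integral>u. (f u - g e u)\<^sup>2 \<partial>P)) \<le> K\<^sup>2" and "0 \<le> K"
  shows "(\<integral>u. ell_LL (f u) (y u) \<partial>P) \<le> (\<Sum>e\<in>E. p e * (\<integral>u. ell_LL (g e u) (y u) \<partial>P)) + K"
proof -
  have lin_diff: "linear (\<lambda>u. f u - g e u)" if "e \<in> E" for e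
    using lin that by (intro linear_compose_sub) auto
  have "(\<integral>u. ell_LL (f u) (y u) \<partial>P)
      \<le> 1 * (\<integral>u. ell_LL (g e u) (y u) \<partial>P) + (\<integral>u. \<bar>f u - g e u\<bar> \<partial>P)" if "e \<in> E" for e
  proof -
    have "(\<integral>u. ell_LL (f u) (y u) \<partial>P) \<le> (\<integral>u. ell_LL (g e u) (y u) + \<bar>f u - g e u\<bar> \<partial>P)"
      using lin that y ell_LL_le integrable_linear[OF lin_diff[OF that]]
      by (intro integral_mono integrable_log_loss Bochner_Integration.integrable_add) auto
    then show ?thesis
      using lin that y integrable_linear[OF lin_diff[OF that]] by (simp add: integrable_log_loss)
  qed
  then have "(\<integral>u. ell_LL (f u) (y u) \<partial>P)
      \<le> 1 * (\<Sum>e\<in>E. p e * (\<integral>u. ell_LL (g e u) (y u) \<partial>P)) + (\<Sum>e\<in>E. p e * (\<integral>u. \<bar>f u - g e u\<bar> \<partial>P))"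
    by (rule weighted_average_le[OF E])
  moreover have "(\<Sum>e\<in>E. p e * (\<integral>u. \<bar>f u - g e u\<bar> \<partial>P)) \<le> K"
  proof (rule power2_le_imp_le[OF _ \<open>0 \<le> K\<close>])
    have "(\<Sum>e\<in>E. p e * (\<integral>u. \<bar>f u - g e u\<bar> \<partial>P))\<^sup>2 \<le> (\<Sum>e\<in>E. p e * (\<integral>u. \<bar>f u - g e u\<bar> \<partial>P)\<^sup>2)"
      by (rule weighted_mean_square_le[OF E])
    also have "\<dots> \<le> (\<Sum>e\<in>E. p e * (\<integral>u. (f u - g e u)\<^sup>2 \<partial>P))"
      using E(2) lin_diff
      by (intro sum_mono mult_left_mono expectation_abs_square_le borel_measurable_linear
          integrable_linear_square) auto
    finally show "(\<Sum>e\<in>E. p e * (\<integral>u. \<bar>f u - g e u\<bar> \<partial>P))\<^sup>2 \<le> K\<^sup>2"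
      using shift by linarith
  qed
  ultimately show ?thesis
    by simp
qed

lemma square_loss_transfer:
  fixes f y :: "real^'n \<Rightarrow> real" and g :: "'e \<Rightarrow> real^'n \<Rightarrow> real"
  assumes E: "finite E" "\<forall>e\<in>E. 0 \<le> p e" "(\<Sum>e\<in>E. p e) = 1"
    and lin: "linear f" "\<forall>e\<in>E. linear (g e)" "linear y"
    and shift: "(\<Sum>e\<in>E. p e * (\<integral>u. (f u - g e u)\<^sup>2 \<partial>P)) \<le> K"
  shows "(\<integral>u. ell_SE (f u) (y u) \<partial>P) \<le> 2 * (\<Sum>e\<in>E. p e * (\<integral>u. ell_SE (g e u) (y u) \<partial>P)) + 2 * K"
proof -
  have "(\<integral>u. ell_SE (f u) (y u) \<partial>P)
      \<le> 2 * (\<integral>u. ell_SE (g e u) (y u) \<partial>P) + 2 * (\<integral>u. (f u - g e u)\<^sup>2 \<partial>P)" if "e \<in> E" for e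
  proof -
    have lin_e: "linear (\<lambda>u. f u - y u)" "linear (\<lambda>u. g e u - y u)" "linear (\<lambda>u. f u - g e u)"
      using lin that by (auto intro: linear_compose_sub)
    have "(f u - y u)\<^sup>2 \<le> 2 * (g e u - y u)\<^sup>2 + 2 * (f u - g e u)\<^sup>2" for u
      using zero_le_power2[of "(g e u - y u) - (f u - g e u)"] by (simp add: power2_eq_square algebra_simps)
    then have "(\<integral>u. (f u - y u)\<^sup>2 \<partial>P) \<le> (\<integral>u. 2 * (g e u - y u)\<^sup>2 + 2 * (f u - g e u)\<^sup>2 \<partial>P)"
      using lin_e by (intro integral_mono integrable_linear_square Bochner_Integration.integrable_add
          integrable_mult_right)
    then show ?thesis
      using lin_e by (simp add: ell_SE_def integrable_linear_square)
  qed
  then have "(\<integral>u. ell_SE (f u) (y u) \<partial>P)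
      \<le> 2 * (\<Sum>e\<in>E. p e * (\<integral>u. ell_SE (g e u) (y u) \<partial>P)) + (\<Sum>e\<in>E. p e * (2 * (\<integral>u. (f u - g e u)\<^sup>2 \<partial>P)))"
    by (rule weighted_average_le[OF E])
  moreover have "(\<Sum>e\<in>E. p e * (2 * (\<integral>u. (f u - g e u)\<^sup>2 \<partial>P)))
      = 2 * (\<Sum>e\<in>E. p e * (\<integral>u. (f u - g e u)\<^sup>2 \<partial>P))"
    by (simp add: sum_distrib_left mult_ac)
  ultimately show ?thesis
    using shift by linarith
qed

end

section \<open>Domain transfer in linear spurious-correlation SCMs\<close>

locale spurious_scm_domains = finite_second_moments P
  for P :: "(real^'n::finite) measure" +
  fixes A :: "'e \<Rightarrow> real^'n^'n" and c :: "'e \<Rightarrow> real^'n" and G :: "real^'n^'d::finite"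
    and w :: "real^'n" and Es :: "'e set"
  assumes acyclic_domains: "\<forall>e\<in>Es. acyclic (graph_of A e)"
    and spurious: "\<forall>i\<in>interv_set A c Es. \<not> ancestor_of_target A Es w i"
begin

lemma linear_inner_obs: "e \<in> Es \<Longrightarrow> linear (\<lambda>u. v \<bullet> obs G A c e u)"
  using acyclic_domains by (blast intro: linear_inner_right_comp linear_obs)

lemma linear_target: "e \<in> Es \<Longrightarrow> linear (\<lambda>u. w \<bullet> solve A c e u)"
  using acyclic_domains by (blast intro: linear_inner_right_comp linear_solve)

lemma target_invariant: "e \<in> Es \<Longrightarrow> e' \<in> Es \<Longrightarrow> w \<bullet> solve A c e u = w \<bullet> solve A c e' u"
  using acyclic_domains spurious by (blast intro: target_solve_invariant)

lemma inner_shift_moment_mult_vec: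
  assumes "finite E" and "E \<subseteq> Es" and "e0 \<in> Es"
  shows "v \<bullet> ((\<chi> i j. \<Sum>e\<in>E. p e * (\<integral>u. (obs G A c e0 u - obs G A c e u) $ i *
                                          (obs G A c e0 u - obs G A c e u) $ j \<partial>P)) *v v)
    = (\<Sum>e\<in>E. p e * (\<integral>u. (v \<bullet> obs G A c e0 u - v \<bullet> obs G A c e u)\<^sup>2 \<partial>P))"
proof -
  have "linear (\<lambda>u. (obs G A c e0 u - obs G A c e u) $ i)" if "e \<in> E" for e i
    using linear_compose_sub[OF linear_inner_obs[of e0 "axis i 1"] linear_inner_obs[of e "axis i 1"]] assms that
    by (auto simp: cart_eq_inner_axis inner_diff_left inner_diff_right inner_commute)
  then show ?thesis
    using assms(1) by (subst inner_second_moment_mult_vec) (auto intro: integrable_linear_mult simp: inner_diff_right)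
qed

lemma log_loss_domain_transfer:
  assumes E: "finite E" "E \<subseteq> Es" "\<forall>e\<in>E. 0 \<le> p e" "(\<Sum>e\<in>E. p e) = 1" and "e0 \<in> Es"
    and shift: "(\<Sum>e\<in>E. p e * (\<integral>u. (\<theta> \<bullet> obs G A c e0 u - \<theta> \<bullet> obs G A c e u)\<^sup>2 \<partial>P)) \<le> K\<^sup>2"
    and "0 \<le> K"
  shows "(\<integral>u. ell_LL (\<theta> \<bullet> obs G A c e0 u) (label_sign w (solve A c e0 u)) \<partial>P)
    \<le> (\<Sum>e\<in>E. p e * (\<integral>u. ell_LL (\<theta> \<bullet> obs G A c e u) (label_sign w (solve A c e u)) \<partial>P)) + K"
proof -
  have [measurable]: "(\<lambda>u. w \<bullet> solve A c e0 u) \<in> borel_measurable P"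
    using linear_target[OF \<open>e0 \<in> Es\<close>] by (rule borel_measurable_linear)
  have measurable_label: "(\<lambda>u. label_sign w (solve A c e0 u)) \<in> borel_measurable P"
    unfolding label_sign_def by measurable
  have label_eq: "label_sign w (solve A c e u) = label_sign w (solve A c e0 u)" if "e \<in> E" for e u
    using target_invariant[of e e0 u] E(2) \<open>e0 \<in> Es\<close> that by (auto simp: label_sign_def)
  have "(\<integral>u. ell_LL (\<theta> \<bullet> obs G A c e0 u) (label_sign w (solve A c e0 u)) \<partial>P)
      \<le> (\<Sum>e\<in>E. p e * (\<integral>u. ell_LL (\<theta> \<bullet> obs G A c e u) (label_sign w (solve A c e0 u)) \<partial>P)) + K"
    using linear_inner_obs E(2)
    by (intro log_loss_transfer[where g = "\<lambda>e u. \<theta> \<bullet> obs G A c e u", OF E(1,3,4)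
        linear_inner_obs[OF \<open>e0 \<in> Es\<close>] _ measurable_label _ shift \<open>0 \<le> K\<close>])
      (auto simp: label_sign_def)
  also have "\<dots> = (\<Sum>e\<in>E. p e * (\<integral>u. ell_LL (\<theta> \<bullet> obs G A c e u) (label_sign w (solve A c e u)) \<partial>P)) + K"
    by (simp add: label_eq cong: sum.cong)
  finally show ?thesis .
qed

lemma square_loss_domain_transfer:
  assumes E: "finite E" "E \<subseteq> Es" "\<forall>e\<in>E. 0 \<le> p e" "(\<Sum>e\<in>E. p e) = 1" and "e0 \<in> Es"
    and shift: "(\<Sum>e\<in>E. p e * (\<integral>u. (\<theta> \<bullet> obs G A c e0 u - \<theta> \<bullet> obs G A c e u)\<^sup>2 \<partial>P)) \<le> K"
  shows "(\<integral>u. ell_SE (\<theta> \<bullet> obs G A c e0 u) (w \<bullet> solve A c e0 u) \<partial>P)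
    \<le> 2 * (\<Sum>e\<in>E. p e * (\<integral>u. ell_SE (\<theta> \<bullet> obs G A c e u) (w \<bullet> solve A c e u) \<partial>P)) + 2 * K"
proof -
  have target: "w \<bullet> solve A c e u = w \<bullet> solve A c e0 u" if "e \<in> E" for e u
    using target_invariant[of e e0 u] E(2) \<open>e0 \<in> Es\<close> that by blast
  have "(\<integral>u. ell_SE (\<theta> \<bullet> obs G A c e0 u) (w \<bullet> solve A c e0 u) \<partial>P)
      \<le> 2 * (\<Sum>e\<in>E. p e * (\<integral>u. ell_SE (\<theta> \<bullet> obs G A c e u) (w \<bullet> solve A c e0 u) \<partial>P)) + 2 * K"
    using linear_inner_obs E(2)
    by (intro square_loss_transfer[where g = "\<lambda>e u. \<theta> \<bullet> obs G A c e u", OF E(1,3,4)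
        linear_inner_obs[OF \<open>e0 \<in> Es\<close>] _ linear_target[OF \<open>e0 \<in> Es\<close>] shift]) auto
  also have "\<dots> = 2 * (\<Sum>e\<in>E. p e * (\<integral>u. ell_SE (\<theta> \<bullet> obs G A c e u) (w \<bullet> solve A c e u) \<partial>P)) + 2 * K"
    by (simp add: target cong: sum.cong)
  finally show ?thesis .
qed

end

theorem theorem1:
  fixes A :: "'e \<Rightarrow> real^'n::finite^'n" and c :: "'e \<Rightarrow> real^'n"
    and G :: "real^'n^'d::finite" and w :: "real^'n"
    and P :: "(real^'n) measure"
    and Es Etrain :: "'e set" and pe :: "'e \<Rightarrow> real" and eplus :: 'e
    and Q :: "nat \<Rightarrow> real^'d" and lam :: "nat \<Rightarrow> real"
    and xa xb :: "'p::finite \<Rightarrow> real^'d"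
    and Ut :: "nat \<Rightarrow> real^'d" and V :: "nat \<Rightarrow> real^'p" and sig :: "nat \<Rightarrow> real"
    and r :: nat and Qperp :: "nat \<Rightarrow> real^'d" and \<theta> :: "real^'d"
  defines "Mplus \<equiv> (\<chi> i j. \<Sum>e\<in>Etrain. pe e *
            (\<integral>u. ((obs G A c eplus u - obs G A c e u) $ i) *
                  ((obs G A c eplus u - obs G A c e u) $ j) \<partial>P))"
    and "s \<equiv> min r (card (interv_set A c Es))"
    and "B \<equiv> mat_opnorm (CARD('d) - r) (card (interv_set A c Es)) (\<lambda>i j. (Qperp i \<bullet> Q j) * sqrt (lam j))"
  assumes dag: "\<forall>e\<in>Es. acyclic (graph_of A e)"
    and spurious: "\<forall>i\<in>(interv_set A c Es). \<not> ancestor_of_target A Es w i"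
    and P_prob: "prob_space P" and P_sets: "sets P = sets borel"
    and P_moments: "\<forall>k. integrable P (\<lambda>u. (u $ k)\<^sup>2)"
    and train_sub: "Etrain \<subseteq> Es" and train_fin: "finite Etrain"
    and pe_nonneg: "\<forall>e\<in>Etrain. 0 \<le> pe e" and pe_sum: "(\<Sum>e\<in>Etrain. pe e) = 1"
    and test_dom: "eplus \<in> Es"
    and Q_orth: "orthonormal_upto (card (interv_set A c Es)) Q"
    and M_eig: "Mplus = (\<Sum>j<card (interv_set A c Es). lam j *\<^sub>R outer (Q j) (Q j))"
    and lam_sorted: "\<forall>i j. i \<le> j \<longrightarrow> j < card (interv_set A c Es) \<longrightarrow> lam j \<le> lam i"
    and lam_zero: "\<forall>j. card (interv_set A c Es) \<le> j \<longrightarrow> lam j = 0"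
    and U_orth: "orthonormal_upto CARD('d) Ut"
    and V_orth: "orthonormal_upto CARD('p) V"
    and sig_nonneg: "\<forall>j. 0 \<le> sig j"
    and sig_sorted: "\<forall>i j. i \<le> j \<longrightarrow> j < min CARD('d) CARD('p) \<longrightarrow> sig j \<le> sig i"
    and svd: "\<forall>p. xa p - xb p = (\<Sum>j<min CARD('d) CARD('p). (sig j * V j $ p) *\<^sub>R Ut j)"
    and r_le: "r \<le> CARD('d)"
    and perp_orth: "orthonormal_upto (CARD('d) - r) Qperp"
    and perp_compl: "\<forall>i<CARD('d) - r. \<forall>j<r. Qperp i \<bullet> Ut j = 0"
    and ncm: "\<forall>j<r. \<theta> \<bullet> Ut j = 0"
  shows "((\<integral>u. ell_LL (\<theta> \<bullet> obs G A c eplus u) (label_sign w (solve A c eplus u)) \<partial>P)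
           \<le> (\<Sum>e\<in>Etrain. pe e *
                 (\<integral>u. ell_LL (\<theta> \<bullet> obs G A c e u) (label_sign w (solve A c e u)) \<partial>P))
              + norm \<theta> * B)
    \<and> ((\<integral>u. ell_SE (\<theta> \<bullet> obs G A c eplus u) (w \<bullet> solve A c eplus u) \<partial>P)
           \<le> 2 * (\<Sum>e\<in>Etrain. pe e *
                 (\<integral>u. ell_SE (\<theta> \<bullet> obs G A c e u) (w \<bullet> solve A c e u) \<partial>P))
              + 2 * (norm \<theta>)\<^sup>2 * B\<^sup>2)
    \<and> (B\<^sup>2 \<le> lam 0 * (subspace_dist Ut Q s)\<^sup>2 + lam s)"
proof -
  (* Of the singular value decomposition only the orthonormality of Ut is used. *)
  interpret spurious_scm_domains P A c G w Es
    using P_prob P_sets P_moments dag spurious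
    by (simp add: spurious_scm_domains_def spurious_scm_domains_axioms_def
        finite_second_moments_def finite_second_moments_axioms_def)
  have shift_moment: "v \<bullet> (Mplus *v v)
      = (\<Sum>e\<in>Etrain. pe e * (\<integral>u. (v \<bullet> obs G A c eplus u - v \<bullet> obs G A c e u)\<^sup>2 \<partial>P))" for v
    unfolding Mplus_def by (rule inner_shift_moment_mult_vec[OF train_fin train_sub test_dom])
  have lam_nonneg: "\<forall>j. 0 \<le> lam j"
  proof
    fix j
    have "0 \<le> v \<bullet> (Mplus *v v)" for v
      unfolding shift_moment using pe_nonneg by (intro sum_nonneg mult_nonneg_nonneg integral_nonneg_AE) auto
    then show "0 \<le> lam j"
      using outer_sum_coeff_nonneg[OF Q_orth, of lam j] lam_zero unfolding M_eig
      by (cases "j < card (interv_set A c Es)") auto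
  qed
  have Ut_r: "orthonormal_upto r Ut"
    using U_orth r_le by (simp add: orthonormal_upto_def)
  have \<theta>_perp: "\<forall>j<r. Ut j \<bullet> \<theta> = 0"
    using ncm by (simp add: inner_commute)
  have energy: "(\<Sum>e\<in>Etrain. pe e * (\<integral>u. (\<theta> \<bullet> obs G A c eplus u - \<theta> \<bullet> obs G A c e u)\<^sup>2 \<partial>P))
      \<le> (norm \<theta> * B)\<^sup>2"
    using spectral_energy_le_mat_opnorm[OF Ut_r perp_orth perp_compl r_le lam_nonneg \<theta>_perp,
        where n = "card (interv_set A c Es)" and Q = Q] shift_moment[of \<theta>]
    unfolding B_def M_eig inner_outer_sum_mult_vec by linarith
  have "0 \<le> norm \<theta> * B"
    unfolding B_def by (simp add: mat_opnorm_nonneg)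
  then show ?thesis
    using log_loss_domain_transfer[OF train_fin train_sub pe_nonneg pe_sum test_dom energy]
      square_loss_domain_transfer[OF train_fin train_sub pe_nonneg pe_sum test_dom energy]
      mat_opnorm_complement_spectral_le[OF Ut_r perp_orth perp_compl r_le Q_orth lam_nonneg lam_sorted refl]
    unfolding B_def s_def by (simp add: power_mult_distrib mult_ac)
qed

end
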